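(* The maps $\sigma,\tau,\theta:E\to E$ defined by \[\sigma(A)=-A^*,\qquad \tau(A)=-A^{\mathrm t},\qquad \theta(A)=TAT^{-1}\] pairwise commute.
   Context: Setting: - $V$ is a finite-dimensional complex inner product space, and $W=V\oplus V^*$ carries the orthogonal-sum unitary structure $\langle\,,\rangle$, where $V^*$ gets the structure transported from $V$ via $C_0v=\langle v,\cdot\rangle_V$, i.e. $\langle f,\tilde f\rangle=\langle C_0^{-1}\tilde f,C_0^{-1}f\rangle_V$. - $b$ is either $s(v_1+f_1,v_2+f_2)=f_1(v_2)+f_2(v_1)$ or $a(v_1+f_1,v_2+f_2)=f_1(v_2)-f_2(v_1)$. - $C:W\to W$ is antilinear with $C|_V=C_0$ and $C|_{V^*}=C_0^{-1}$ (if $b=s$) or $-C_0^{-1}$ (if $b=a$), so that $b(Cw_1,w_2)=\langle w_1,w_2\rangle$. - $E$ is either $\mathrm{End}(W)$ or $\mathrm{End}(V)\oplus\mathrm{End}(V^* )$. - $A^*$ is the adjoint with respect to $\langle\,,\rangle$, and $A^{\mathrm t}$ the adjoint with respect to $b$ ($b(Aw_1,w_2)=b(w_1,A^{\mathrm t}w_2)$). - $T:W\to W$ is antiunitary, commutes with $C$, satisfies $T^2=\pm\mathrm{Id}$, and is either nonmixing ($T(V)=V$, $T(V^* )=V^*$) or mixing ($T(V)=V^*$, $T(V^* )=V$). *)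

theory Defs
  imports "HOL-Analysis.Analysis"
begin

text \<open>V is modelled as the complex coordinate space complex^('n::finite) ('n an arbitrary finite
index type) with inner product antilinear in the first argument,
vinner v w = sum_i cnj(v_i) w_i.  A functional f in V* is represented by its coordinate
vector (f_1,...,f_n), acting by f(v) = sum_i f_i v_i.  W = V (+) V* is the type of pairs.\<close>

type_synonym 'n W = "(complex^'n) \<times> (complex^'n)"

definition vscale :: "complex \<Rightarrow> complex^('n::finite) \<Rightarrow> complex^('n::finite)" where
  "vscale c v = (\<chi> i. c * v $ i)"

definition vinner :: "complex^('n::finite) \<Rightarrow> complex^('n::finite) \<Rightarrow> complex" where
  "vinner v w = (\<Sum>i\<in>UNIV. cnj (v $ i) * w $ i)"

definition pair :: "complex^('n::finite) \<Rightarrow> complex^('n::finite) \<Rightarrow> complex" where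
  "pair f v = (\<Sum>i\<in>UNIV. f $ i * v $ i)"

text \<open>C0 v = <v, . >_V, as a functional\<close>
definition C0 :: "complex^('n::finite) \<Rightarrow> complex^('n::finite)" where
  "C0 v = (\<chi> i. cnj (v $ i))"

definition dinner :: "complex^('n::finite) \<Rightarrow> complex^('n::finite) \<Rightarrow> complex" where
  "dinner f g = vinner (inv C0 g) (inv C0 f)"

definition wadd :: "('n::finite) W \<Rightarrow> ('n::finite) W \<Rightarrow> ('n::finite) W" where
  "wadd x y = (fst x + fst y, snd x + snd y)"

definition wscale :: "complex \<Rightarrow> ('n::finite) W \<Rightarrow> ('n::finite) W" where
  "wscale c x = (vscale c (fst x), vscale c (snd x))"

definition wneg :: "('n::finite) W \<Rightarrow> ('n::finite) W" where
  "wneg x = (- fst x, - snd x)"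

definition winner :: "('n::finite) W \<Rightarrow> ('n::finite) W \<Rightarrow> complex" where
  "winner x y = vinner (fst x) (fst y) + dinner (snd x) (snd y)"

text \<open>the bilinear form b: symmetric s (symm = True) or alternating a (symm = False)\<close>
definition bform :: "bool \<Rightarrow> ('n::finite) W \<Rightarrow> ('n::finite) W \<Rightarrow> complex" where
  "bform symm x y = (if symm then pair (snd x) (fst y) + pair (snd y) (fst x)
                           else pair (snd x) (fst y) - pair (snd y) (fst x))"

definition Cmap :: "bool \<Rightarrow> ('n::finite) W \<Rightarrow> ('n::finite) W" where
  "Cmap symm x = (if symm then inv C0 (snd x) else - inv C0 (snd x), C0 (fst x))"

definition clinear_W :: "(('n::finite) W \<Rightarrow> ('n::finite) W) \<Rightarrow> bool" where
  "clinear_W A \<longleftrightarrow> (\<forall>x y. A (wadd x y) = wadd (A x) (A y)) \<and>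
                    (\<forall>c x. A (wscale c x) = wscale c (A x))"

definition antilinear_W :: "(('n::finite) W \<Rightarrow> ('n::finite) W) \<Rightarrow> bool" where
  "antilinear_W A \<longleftrightarrow> (\<forall>x y. A (wadd x y) = wadd (A x) (A y)) \<and>
                    (\<forall>c x. A (wscale c x) = wscale (cnj c) (A x))"

definition Vsub :: "('n::finite) W set" where "Vsub = {x. snd x = 0}"
definition Dsub :: "('n::finite) W set" where "Dsub = {x. fst x = 0}"

text \<open>E = End(W) (full = True) or End(V) (+) End(V*) (full = False)\<close>
definition Ealg :: "bool \<Rightarrow> (('n::finite) W \<Rightarrow> ('n::finite) W) set" where
  "Ealg full = (if full then {A. clinear_W A}
                else {A. clinear_W A \<and> A ` Vsub \<subseteq> Vsub \<and> A ` Dsub \<subseteq> Dsub})"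

definition adj :: "(('n::finite) W \<Rightarrow> ('n::finite) W) \<Rightarrow> (('n::finite) W \<Rightarrow> ('n::finite) W)" where
  "adj A = (THE B. \<forall>x y. winner (A x) y = winner x (B y))"

definition btrans :: "bool \<Rightarrow> (('n::finite) W \<Rightarrow> ('n::finite) W) \<Rightarrow> (('n::finite) W \<Rightarrow> ('n::finite) W)" where
  "btrans symm A = (THE B. \<forall>x y. bform symm (A x) y = bform symm x (B y))"

definition antiunitary_W :: "(('n::finite) W \<Rightarrow> ('n::finite) W) \<Rightarrow> bool" where
  "antiunitary_W T \<longleftrightarrow> antilinear_W T \<and> bij T \<and>
     (\<forall>x y. winner (T x) (T y) = cnj (winner x y))"

definition sigma_map :: "(('n::finite) W \<Rightarrow> ('n::finite) W) \<Rightarrow> (('n::finite) W \<Rightarrow> ('n::finite) W)" where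
  "sigma_map A = (\<lambda>w. wneg (adj A w))"

definition tau_map :: "bool \<Rightarrow> (('n::finite) W \<Rightarrow> ('n::finite) W) \<Rightarrow> (('n::finite) W \<Rightarrow> ('n::finite) W)" where
  "tau_map symm A = (\<lambda>w. wneg (btrans symm A w))"

definition theta_map :: "(('n::finite) W \<Rightarrow> ('n::finite) W) \<Rightarrow> (('n::finite) W \<Rightarrow> ('n::finite) W) \<Rightarrow> (('n::finite) W \<Rightarrow> ('n::finite) W)" where
  "theta_map T A = T \<circ> A \<circ> inv T"

end

theory Submission
  imports Defs
begin

text \<open>Write \<open>C\<^sup>-\<^sup>1\<close> for the inverse of \<open>C\<close>. Since \<open>b(x, y) = \<langle>C\<^sup>-\<^sup>1 x, y\<rangle>\<close>, the \<open>b\<close>-transpose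
is \<open>A\<^sup>t = C\<^sup>-\<^sup>1 A\<^sup>* C\<close>, i.e. \<open>\<tau> = C\<^sup>-\<^sup>1 \<sigma> C\<close>. Both \<open>C\<^sup>-\<^sup>1\<close> and \<open>T\<close> reverse the inner product
(\<open>\<langle>U p, U q\<rangle> = \<langle>q, p\<rangle>\<close>), and conjugation by such a map commutes with \<open>\<sigma>\<close>. So \<open>\<sigma>\<close> commutes
with \<open>\<theta>\<close>, \<open>\<sigma>\<tau> = C\<^sup>-\<^sup>1 \<sigma>\<^sup>2 C = \<tau>\<sigma>\<close>, and \<open>\<tau>\<theta> = \<theta>\<tau>\<close> because \<open>T\<close> commutes with \<open>C\<close>.\<close>

lemma C0_C0 [simp]: "C0 (C0 v) = v"
  by (simp add: C0_def vec_eq_iff)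

lemma inv_C0 [simp]: "inv C0 = C0"
  by (rule inv_equality) simp_all

lemma wadd_eq_plus [simp]: "wadd x y = x + y"
  by (simp add: wadd_def prod_eq_iff)

lemma wneg_eq_uminus [simp]: "wneg x = - x"
  by (simp add: wneg_def prod_eq_iff)

lemma wscale_eq: "wscale c x = (c *s fst x, c *s snd x)"
  by (simp add: wscale_def vscale_def vector_scalar_mult_def)

lemma uminus_eq_wscale: "- x = wscale (-1) x"
  by (simp add: wscale_eq prod_eq_iff vec_eq_iff)

lemma winner_expand:
  "winner x y = (\<Sum>i\<in>UNIV. cnj (fst x $ i) * fst y $ i) + (\<Sum>i\<in>UNIV. cnj (snd x $ i) * snd y $ i)"
  by (simp add: winner_def dinner_def vinner_def C0_def mult.commute)

lemma winner_commute: "winner y x = cnj (winner x y)"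
  by (simp add: winner_expand mult.commute)

lemma winner_uminus_left [simp]: "winner (- x) y = - winner x y"
  and winner_uminus_right [simp]: "winner x (- y) = - winner x y"
  by (simp_all add: winner_expand sum_negf)

lemma winner_add_left: "winner (x + z) y = winner x y + winner z y"
  by (simp add: winner_expand sum.distrib algebra_simps)

lemma winner_wscale_left: "winner (wscale c x) y = cnj c * winner x y"
  by (simp add: winner_expand wscale_eq sum_distrib_left algebra_simps)

lemma winner_zero_left [simp]: "winner 0 y = 0"
  by (simp add: winner_expand)

lemma winner_sum_left: "winner (sum f S) y = (\<Sum>s\<in>S. winner (f s) y)"
  by (induction S rule: infinite_finite_induct) (simp_all add: winner_add_left)

lemma sum_cnj_axis_mult: "(\<Sum>j\<in>UNIV. cnj (axis i 1 $ j) * (w::complex^'n::finite) $ j) = w $ i"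
proof -
  have "(\<Sum>j\<in>UNIV. cnj (axis i 1 $ j) * w $ j) = (\<Sum>j\<in>UNIV. if j = i then w $ j else 0)"
    by (rule sum.cong) (auto simp: axis_def)
  then show ?thesis
    by simp
qed

lemma winner_nondegenerate:
  assumes "\<And>x. winner x u = winner x v"
  shows "u = v"
proof -
  have "fst u $ i = fst v $ i" "snd u $ i = snd v $ i" for i
    using assms[of "(axis i 1, 0)"] assms[of "(0, axis i 1)"]
    by (simp_all add: winner_expand sum_cnj_axis_mult)
  then show ?thesis
    by (simp add: prod_eq_iff vec_eq_iff)
qed

definition Cinv :: "bool \<Rightarrow> 'n::finite W \<Rightarrow> 'n W" where
  "Cinv symm x = (C0 (snd x), if symm then C0 (fst x) else - C0 (fst x))"

lemma Cinv_Cmap [simp]: "Cinv symm (Cmap symm x) = x"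
  and Cmap_Cinv [simp]: "Cmap symm (Cinv symm x) = x"
  and Cinv_uminus: "Cinv symm (- x) = - Cinv symm x"
  by (simp_all add: Cinv_def Cmap_def C0_def prod_eq_iff vec_eq_iff)

lemma bform_eq_winner: "bform symm x y = winner (Cinv symm x) y"
  by (simp add: bform_def winner_expand Cinv_def C0_def pair_def sum_negf mult.commute)

lemma winner_Cinv: "winner (Cinv symm p) (Cinv symm q) = winner q p"
  by (simp add: winner_expand Cinv_def C0_def mult.commute)

definition is_adjoint :: "('n::finite W \<Rightarrow> 'n W) \<Rightarrow> ('n W \<Rightarrow> 'n W) \<Rightarrow> bool" where
  "is_adjoint A B \<longleftrightarrow> (\<forall>x y. winner (A x) y = winner x (B y))"

lemma is_adjointD: "is_adjoint A B \<Longrightarrow> winner (A x) y = winner x (B y)"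
  unfolding is_adjoint_def by blast

lemma adj_eqI:
  assumes "is_adjoint A B"
  shows "adj A = B"
  unfolding adj_def
proof (rule the_equality)
  show "\<forall>x y. winner (A x) y = winner x (B y)"
    using assms unfolding is_adjoint_def .
  fix B' assume "\<forall>x y. winner (A x) y = winner x (B' y)"
  then show "B' = B"
    using assms unfolding is_adjoint_def by (metis winner_nondegenerate ext)
qed

lemma is_adjoint_commute: "is_adjoint A B \<Longrightarrow> is_adjoint B A"
  unfolding is_adjoint_def by (metis winner_commute)

lemma is_adjoint_uminus: "is_adjoint A B \<Longrightarrow> is_adjoint (- A) (- B)"
  unfolding is_adjoint_def by simp

lemma is_adjoint_conj:
  assumes "is_adjoint A B"
    and reverses: "\<And>p q. winner (U p) (U q) = winner q p"
    and "U \<circ> V = id"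
  shows "is_adjoint (U \<circ> A \<circ> V) (U \<circ> B \<circ> V)"
  unfolding is_adjoint_def
proof (intro allI)
  fix x y
  have UV: "U (V z) = z" for z
    using \<open>U \<circ> V = id\<close> by (metis comp_apply id_apply)
  have "winner (U (A (V x))) (U (V y)) = cnj (winner (A (V x)) (V y))"
    by (simp add: reverses winner_commute[of "A (V x)"])
  also have "\<dots> = cnj (winner (V x) (B (V y)))"
    by (simp add: is_adjointD[OF assms(1)])
  also have "\<dots> = winner (U (V x)) (U (B (V y)))"
    by (simp add: reverses winner_commute[of "V x"])
  finally show "winner ((U \<circ> A \<circ> V) x) y = winner x ((U \<circ> B \<circ> V) y)"
    by (simp add: UV)
qed

lemma clinear_W_has_adjoint:
  fixes A :: "'n::finite W \<Rightarrow> 'n W"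
  assumes "clinear_W A"
  shows "\<exists>B. is_adjoint A B"
proof -
  have add: "A (x + y) = A x + A y" and scale: "A (wscale c x) = wscale c (A x)" for x y c
    using assms unfolding clinear_W_def wadd_eq_plus by blast+
  have A_sum: "A (sum f S) = (\<Sum>s\<in>S. A (f s))" for f and S :: "'b set"
    using add[of 0 0] by (induction S rule: infinite_finite_induct) (simp_all add: add)
  define e1 e2 :: "'n \<Rightarrow> 'n W" where "e1 i = (axis i 1, 0)" and "e2 i = (0, axis i 1)" for i
  have basis: "x = (\<Sum>i\<in>UNIV. wscale (fst x $ i) (e1 i)) + (\<Sum>i\<in>UNIV. wscale (snd x $ i) (e2 i))" for x
    by (simp add: prod_eq_iff fst_sum snd_sum wscale_eq e1_def e2_def basis_expansion)
  define B where "B y = ((\<chi> i. winner (A (e1 i)) y), (\<chi> i. winner (A (e2 i)) y))" for y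
  have "winner (A x) y = winner x (B y)" for x y
  proof -
    have "winner (A x) y = (\<Sum>i\<in>UNIV. cnj (fst x $ i) * winner (A (e1 i)) y)
                          + (\<Sum>i\<in>UNIV. cnj (snd x $ i) * winner (A (e2 i)) y)"
      by (subst basis[of x]) (simp add: add A_sum scale winner_add_left winner_sum_left winner_wscale_left)
    then show ?thesis
      by (simp add: winner_expand B_def)
  qed
  then show ?thesis
    unfolding is_adjoint_def by blast
qed

lemma btrans_eqI:
  assumes "\<forall>x y. bform symm (A x) y = bform symm x (B y)"
  shows "btrans symm A = B"
  unfolding btrans_def
proof (rule the_equality)
  show "\<forall>x y. bform symm (A x) y = bform symm x (B y)"
    using assms .
  fix B' assume B': "\<forall>x y. bform symm (A x) y = bform symm x (B' y)"
  have "winner z (B' y) = winner z (B y)" for y z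
    using assms[rule_format, of "Cmap symm z" y] B'[rule_format, of "Cmap symm z" y]
    by (simp add: bform_eq_winner)
  then show "B' = B"
    by (simp add: winner_nondegenerate ext)
qed

lemma btrans_eq:
  assumes "is_adjoint A B"
  shows "btrans symm A = Cinv symm \<circ> B \<circ> Cmap symm"
proof (rule btrans_eqI, intro allI)
  fix x y
  have "bform symm (A x) y = winner (Cinv symm (A x)) (Cinv symm (Cmap symm y))"
    by (simp add: bform_eq_winner)
  also have "\<dots> = cnj (winner (A x) (Cmap symm y))"
    by (simp only: winner_Cinv winner_commute[of "A x"] complex_cnj_cnj)
  also have "\<dots> = cnj (winner x (B (Cmap symm y)))"
    by (simp add: is_adjointD[OF assms])
  also have "\<dots> = winner (Cinv symm x) (Cinv symm (B (Cmap symm y)))"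
    by (simp only: winner_Cinv winner_commute[of x] complex_cnj_cnj)
  finally show "bform symm (A x) y = bform symm x ((Cinv symm \<circ> B \<circ> Cmap symm) y)"
    by (simp add: bform_eq_winner)
qed

lemma sigma_map_eq: "is_adjoint A B \<Longrightarrow> sigma_map A = - B"
  by (simp add: sigma_map_def adj_eqI fun_Compl_def)

lemma is_adjoint_sigma_map: "is_adjoint A B \<Longrightarrow> is_adjoint (sigma_map A) (- A)"
  using is_adjoint_uminus[OF is_adjoint_commute] by (simp add: sigma_map_eq)

lemma sigma_map_sigma_map: "is_adjoint A B \<Longrightarrow> sigma_map (sigma_map A) = A"
  by (simp add: sigma_map_eq[OF is_adjoint_sigma_map] fun_eq_iff)

lemma tau_map_eq: "is_adjoint A B \<Longrightarrow> tau_map symm A = Cinv symm \<circ> sigma_map A \<circ> Cmap symm"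
  by (simp add: tau_map_def btrans_eq sigma_map_eq Cinv_uminus fun_eq_iff)

lemma sigma_map_conj:
  assumes "is_adjoint A B"
    and "\<And>p q. winner (U p) (U q) = winner q p"
    and "U \<circ> V = id"
    and "\<And>x. U (- x) = - U x"
  shows "sigma_map (U \<circ> A \<circ> V) = U \<circ> sigma_map A \<circ> V"
  unfolding sigma_map_eq[OF is_adjoint_conj[OF assms(1-3)]] sigma_map_eq[OF assms(1)]
  by (simp add: fun_eq_iff assms(4))

lemma antiunitary_W_reverses:
  assumes "antiunitary_W T"
  shows "winner (T p) (T q) = winner q p"
proof -
  have "winner (T p) (T q) = cnj (winner p q)"
    using assms unfolding antiunitary_W_def by blast
  then show ?thesis
    by (simp add: winner_commute[of q p])
qed

lemma antiunitary_W_uminus: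
  assumes "antiunitary_W T"
  shows "T (- x) = - T x"
proof -
  have "T (wscale (-1) x) = wscale (cnj (-1)) (T x)"
    using assms unfolding antiunitary_W_def antilinear_W_def by blast
  then show ?thesis
    by (simp flip: uminus_eq_wscale)
qed

lemma antiunitary_W_comp_inv: "antiunitary_W T \<Longrightarrow> T \<circ> inv T = id"
  unfolding antiunitary_W_def by (meson bij_is_surj surj_iff)

lemma antiunitary_W_inv_comp: "antiunitary_W T \<Longrightarrow> inv T \<circ> T = id"
  unfolding antiunitary_W_def by (meson bij_is_inj inj_iff)

lemma is_adjoint_theta_map:
  "antiunitary_W T \<Longrightarrow> is_adjoint A B \<Longrightarrow> is_adjoint (theta_map T A) (theta_map T B)"
  unfolding theta_map_def
  by (rule is_adjoint_conj) (simp_all add: antiunitary_W_reverses antiunitary_W_comp_inv)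

lemma sigma_map_theta_map:
  "antiunitary_W T \<Longrightarrow> is_adjoint A B \<Longrightarrow> sigma_map (theta_map T A) = theta_map T (sigma_map A)"
  unfolding theta_map_def
  by (rule sigma_map_conj)
    (simp_all add: antiunitary_W_reverses antiunitary_W_comp_inv antiunitary_W_uminus)

lemma comp_commute_inverse:
  assumes "h \<circ> f = f \<circ> h" "f \<circ> g = id" "g \<circ> f = id"
  shows "h \<circ> g = g \<circ> h"
proof -
  have "h \<circ> g = g \<circ> f \<circ> h \<circ> g"
    using assms(3) by (simp add: comp_assoc)
  also have "\<dots> = g \<circ> h \<circ> f \<circ> g"
    using assms(1) by (simp add: comp_assoc)
  also have "\<dots> = g \<circ> h"
    using assms(2) by (simp add: comp_assoc)
  finally show ?thesis .
qed

lemma sigma_map_tau_map: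
  assumes "is_adjoint A B"
  shows "sigma_map (tau_map symm A) = tau_map symm (sigma_map A)"
proof -
  have adj_sigma: "is_adjoint (sigma_map A) (- A)"
    by (rule is_adjoint_sigma_map[OF assms])
  have "sigma_map (tau_map symm A) = Cinv symm \<circ> sigma_map (sigma_map A) \<circ> Cmap symm"
    unfolding tau_map_eq[OF assms]
    by (rule sigma_map_conj[OF adj_sigma winner_Cinv]) (simp_all add: fun_eq_iff Cinv_uminus)
  then show ?thesis
    by (simp add: tau_map_eq[OF adj_sigma])
qed

lemma tau_map_theta_map:
  assumes T: "antiunitary_W T" and TC: "T \<circ> Cmap symm = Cmap symm \<circ> T"
    and adj: "is_adjoint A B"
  shows "tau_map symm (theta_map T A) = theta_map T (tau_map symm A)"
proof -
  have "T \<circ> Cinv symm = Cinv symm \<circ> T"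
    by (rule comp_commute_inverse[OF TC]) (simp_all add: fun_eq_iff)
  then have T_Cinv: "T (Cinv symm z) = Cinv symm (T z)" for z
    by (rule comp_eq_dest)
  have "Cmap symm \<circ> inv T = inv T \<circ> Cmap symm"
    using antiunitary_W_comp_inv[OF T] antiunitary_W_inv_comp[OF T]
    by (rule comp_commute_inverse[OF TC[symmetric]])
  then have Cmap_inv_T: "Cmap symm (inv T z) = inv T (Cmap symm z)" for z
    by (rule comp_eq_dest)
  have "tau_map symm (theta_map T A) = Cinv symm \<circ> sigma_map (theta_map T A) \<circ> Cmap symm"
    by (rule tau_map_eq[OF is_adjoint_theta_map[OF T adj]])
  also have "\<dots> = Cinv symm \<circ> (T \<circ> sigma_map A \<circ> inv T) \<circ> Cmap symm"
    using sigma_map_theta_map[OF T adj] by (simp add: theta_map_def)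
  also have "\<dots> = T \<circ> (Cinv symm \<circ> sigma_map A \<circ> Cmap symm) \<circ> inv T"
    by (simp add: fun_eq_iff T_Cinv Cmap_inv_T)
  also have "\<dots> = theta_map T (tau_map symm A)"
    by (simp add: tau_map_eq[OF adj] theta_map_def)
  finally show ?thesis .
qed

theorem proposition4p3:
  fixes T :: "'n::finite W \<Rightarrow> 'n W" and symm full :: bool
  assumes "antiunitary_W T"
    and "T \<circ> Cmap symm = Cmap symm \<circ> T"
    and "T \<circ> T = id \<or> T \<circ> T = wneg"
    and "(T ` Vsub = Vsub \<and> T ` Dsub = Dsub) \<or> (T ` Vsub = Dsub \<and> T ` Dsub = Vsub)"
  shows "\<forall>A\<in>Ealg full.
           sigma_map (tau_map symm A) = tau_map symm (sigma_map A) \<and>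
           sigma_map (theta_map T A) = theta_map T (sigma_map A) \<and>
           tau_map symm (theta_map T A) = theta_map T (tau_map symm A)"
proof
  fix A :: "'n W \<Rightarrow> 'n W" assume "A \<in> Ealg full"
  then obtain B where adj: "is_adjoint A B"
    using clinear_W_has_adjoint by (auto simp: Ealg_def split: if_splits)
  show "sigma_map (tau_map symm A) = tau_map symm (sigma_map A) \<and>
           sigma_map (theta_map T A) = theta_map T (sigma_map A) \<and>
           tau_map symm (theta_map T A) = theta_map T (tau_map symm A)"
    using sigma_map_tau_map[OF adj] sigma_map_theta_map[OF assms(1) adj]
      tau_map_theta_map[OF assms(1,2) adj]
    by blast
qed

end
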